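(* Let $f$ be a complex-valued harmonic function in a simply connected open set $R\subseteq\mathbb{C}$. If $\operatorname{int}S\neq\varnothing$, then $f(z)=\alpha+\beta u(z)$ on $R$, where $u$ is a real-valued harmonic function on $R$ and $\alpha,\beta$ are complex constants. Moreover, $S=R$ and $\mathrm{Val}(f,w_0)=\infty$ for every $w_0\in f(R)$.
   Context: Writing $f=u+iv$, $J_f=u_xv_y-u_yv_x$ and $S=\{z\in R: J_f(z)=0\}$. $\mathrm{Val}(f,w)$ is the number (possibly infinite) of distinct $z\in R$ with $f(z)=w$. *)

theory Defs
  imports "HOL-Analysis.Analysis"
begin

definition px :: "(complex \<Rightarrow> real) \<Rightarrow> complex \<Rightarrow> real" where
  "px u z = deriv (\<lambda>t::real. u (z + of_real t)) 0"

definition py :: "(complex \<Rightarrow> real) \<Rightarrow> complex \<Rightarrow> real" where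
  "py u z = deriv (\<lambda>t::real. u (z + \<i> * of_real t)) 0"

definition harmonic_real_on :: "complex set \<Rightarrow> (complex \<Rightarrow> real) \<Rightarrow> bool" where
  "harmonic_real_on R u \<longleftrightarrow>
     open R \<and>
     u differentiable_on R \<and> px u differentiable_on R \<and> py u differentiable_on R \<and>
     continuous_on R (px (px u)) \<and> continuous_on R (py (px u)) \<and>
     continuous_on R (px (py u)) \<and> continuous_on R (py (py u)) \<and>
     (\<forall>z\<in>R. px (px u) z + py (py u) z = 0)"

definition harmonic_on :: "complex set \<Rightarrow> (complex \<Rightarrow> complex) \<Rightarrow> bool" where
  "harmonic_on R f \<longleftrightarrow> harmonic_real_on R (\<lambda>z. Re (f z)) \<and> harmonic_real_on R (\<lambda>z. Im (f z))"

definition jac :: "(complex \<Rightarrow> complex) \<Rightarrow> complex \<Rightarrow> real" where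
  "jac f z = px (\<lambda>z. Re (f z)) z * py (\<lambda>z. Im (f z)) z - py (\<lambda>z. Re (f z)) z * px (\<lambda>z. Im (f z)) z"

definition crit_set :: "complex set \<Rightarrow> (complex \<Rightarrow> complex) \<Rightarrow> complex set" where
  "crit_set R f = {z\<in>R. jac f z = 0}"

definition Val :: "complex set \<Rightarrow> (complex \<Rightarrow> complex) \<Rightarrow> complex \<Rightarrow> enat" where
  "Val R f w = (if finite {z\<in>R. f z = w} then enat (card {z\<in>R. f z = w}) else \<infinity>)"

end

theory Submission
  imports Defs "HOL-Complex_Analysis.Conformal_Mappings"
begin

text \<open>Write \<open>f = u + i v\<close>. For a real function \<open>u\<close> of class \<open>C\<^sup>2\<close>, the complex gradient
  \<open>u\<^sub>x - i u\<^sub>y\<close> is holomorphic exactly when \<open>u\<close> is harmonic: its Cauchy-Riemann equations are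
  Laplace's equation and the symmetry of the mixed partials (which holds as soon as \<open>u\<close> is
  differentiable near a point and its first partials are differentiable at that point).
  With \<open>g\<^sub>u, g\<^sub>v\<close> the complex gradients of \<open>u, v\<close> one has \<open>J\<^sub>f = Im (g\<^sub>u conj g\<^sub>v)\<close>. On an open
  set where \<open>J\<^sub>f\<close> vanishes, either \<open>g\<^sub>u = 0\<close> or \<open>g\<^sub>v / g\<^sub>u\<close> is a real-valued holomorphic function,
  hence a real constant \<open>l\<close>; by analytic continuation this persists on all of \<open>R\<close>. So \<open>u\<close> is
  constant or \<open>v = l u + c\<close>, which gives \<open>f = \<alpha> + \<beta> w\<close> with \<open>w\<close> real harmonic, and \<open>J\<^sub>f = 0\<close> on \<open>R\<close>.
  Finally every level set of a real harmonic \<open>w\<close> on a connected open subset of the plane is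
  infinite: were it finite, removing it would leave \<open>R\<close> connected, so \<open>w - w z\<^sub>0\<close> would have
  constant sign; but \<open>w\<close> is locally the real part of a holomorphic function, which by the open
  mapping theorem takes values on both sides of \<open>w z\<^sub>0\<close> unless \<open>w\<close> is constant.\<close>

section \<open>Directional derivatives and the symmetry of mixed partials\<close>

definition directional_derivative :: "('a::real_normed_vector \<Rightarrow> real) \<Rightarrow> 'a \<Rightarrow> 'a \<Rightarrow> real" where
  "directional_derivative u v z = deriv (\<lambda>t. u (z + t *\<^sub>R v)) 0"

lemma has_real_derivative_along_line:
  assumes "(u has_derivative D) (at (z + s *\<^sub>R v))"
  shows "((\<lambda>t. u (z + t *\<^sub>R v)) has_real_derivative D v) (at s)"
proof -
  have "((\<lambda>t. z + t *\<^sub>R v) has_derivative (\<lambda>h. h *\<^sub>R v)) (at s)"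
    by (auto intro!: derivative_eq_intros)
  from has_derivative_compose[OF this assms]
  have "((\<lambda>t. u (z + t *\<^sub>R v)) has_derivative (\<lambda>h. D (h *\<^sub>R v))) (at s)" .
  moreover have "(\<lambda>h. D (h *\<^sub>R v)) = (*) (D v)"
    using has_derivative_linear[OF assms] by (auto simp: linear_scale)
  ultimately show ?thesis
    by (simp add: has_field_derivative_def)
qed

lemma directional_derivative_eq:
  assumes "(u has_derivative D) (at z)"
  shows "directional_derivative u v z = D v"
  unfolding directional_derivative_def
  by (rule DERIV_imp_deriv, rule has_real_derivative_along_line) (use assms in simp)

lemma has_real_derivative_directional_derivative:
  assumes "u differentiable (at (z + s *\<^sub>R v))"
  shows "((\<lambda>t. u (z + t *\<^sub>R v)) has_real_derivative directional_derivative u v (z + s *\<^sub>R v)) (at s)"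
proof -
  obtain D where D: "(u has_derivative D) (at (z + s *\<^sub>R v))"
    using assms by (auto simp: differentiable_def)
  show ?thesis
    using has_real_derivative_along_line[OF D] directional_derivative_eq[OF D] by simp
qed

definition second_difference :: "('a::real_normed_vector \<Rightarrow> real) \<Rightarrow> 'a \<Rightarrow> 'a \<Rightarrow> 'a \<Rightarrow> real \<Rightarrow> real" where
  "second_difference u z v w t = u (z + t *\<^sub>R v + t *\<^sub>R w) - u (z + t *\<^sub>R v) - u (z + t *\<^sub>R w) + u z"

lemma second_difference_commute: "second_difference u z v w t = second_difference u z w v t"
  by (simp add: second_difference_def add_ac)

lemma second_difference_mvt:
  assumes "0 < t" and diff: "\<And>a b. a \<in> {0..t} \<Longrightarrow> b \<in> {0..t} \<Longrightarrow> u differentiable (at (z + a *\<^sub>R v + b *\<^sub>R w))"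
  shows "\<exists>\<xi>\<in>{0<..<t}. second_difference u z v w t =
           t * (directional_derivative u v (z + t *\<^sub>R w + \<xi> *\<^sub>R v) - directional_derivative u v (z + \<xi> *\<^sub>R v))"
proof -
  have "\<exists>\<xi>. 0 < \<xi> \<and> \<xi> < t \<and>
     (u (z + t *\<^sub>R w + t *\<^sub>R v) - u (z + t *\<^sub>R v)) - (u (z + t *\<^sub>R w + 0 *\<^sub>R v) - u (z + 0 *\<^sub>R v)) =
     (t - 0) * (directional_derivative u v (z + t *\<^sub>R w + \<xi> *\<^sub>R v) - directional_derivative u v (z + \<xi> *\<^sub>R v))"
  proof (rule MVT2[OF \<open>0 < t\<close>])
    fix s assume s: "0 \<le> s" "s \<le> t"
    have "u differentiable (at (z + t *\<^sub>R w + s *\<^sub>R v))" "u differentiable (at (z + s *\<^sub>R v))"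
      using diff[of s t] diff[of s 0] s \<open>0 < t\<close> by (simp_all add: add_ac)
    then show "((\<lambda>s. u (z + t *\<^sub>R w + s *\<^sub>R v) - u (z + s *\<^sub>R v)) has_real_derivative
        directional_derivative u v (z + t *\<^sub>R w + s *\<^sub>R v) - directional_derivative u v (z + s *\<^sub>R v)) (at s)"
      by (intro derivative_intros has_real_derivative_directional_derivative)
  qed
  then obtain \<xi> where "0 < \<xi>" "\<xi> < t" and eq:
    "u (z + t *\<^sub>R w + t *\<^sub>R v) - u (z + t *\<^sub>R v) - (u (z + t *\<^sub>R w) - u z) =
     t * (directional_derivative u v (z + t *\<^sub>R w + \<xi> *\<^sub>R v) - directional_derivative u v (z + \<xi> *\<^sub>R v))"
    by auto
  have "second_difference u z v w t = u (z + t *\<^sub>R w + t *\<^sub>R v) - u (z + t *\<^sub>R v) - (u (z + t *\<^sub>R w) - u z)"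
    by (simp add: second_difference_def add_ac)
  with eq \<open>0 < \<xi>\<close> \<open>\<xi> < t\<close> show ?thesis
    by auto
qed

lemma norm_scaleR_add_le:
  fixes v w :: "'a::real_normed_vector"
  assumes "a \<in> {0..t}" "c \<in> {0..t}"
  shows "norm (a *\<^sub>R v + c *\<^sub>R w) \<le> t * (norm v + norm w)"
proof -
  have "norm (a *\<^sub>R v + c *\<^sub>R w) \<le> a * norm v + c * norm w"
    using assms norm_triangle_ineq[of "a *\<^sub>R v" "c *\<^sub>R w"] by simp
  also have "\<dots> \<le> t * (norm v + norm w)"
    using assms by (simp add: distrib_left add_mono mult_right_mono)
  finally show ?thesis .
qed

lemma second_difference_bound:
  fixes u :: "'a::real_normed_vector \<Rightarrow> real" and v w z :: 'a
  defines "g \<equiv> directional_derivative u v"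
  assumes "0 < t" "0 \<le> e" "linear D"
    and diff: "\<And>a c. a \<in> {0..t} \<Longrightarrow> c \<in> {0..t} \<Longrightarrow> u differentiable (at (z + a *\<^sub>R v + c *\<^sub>R w))"
    and approx: "\<And>y. norm (y - z) \<le> t * (norm v + norm w) \<Longrightarrow> \<bar>g y - g z - D (y - z)\<bar> \<le> e * norm (y - z)"
  shows "\<bar>second_difference u z v w t / t\<^sup>2 - D w\<bar> \<le> e * (2 * norm v + norm w)"
proof -
  obtain \<xi> where \<xi>: "\<xi> \<in> {0<..<t}"
    and mvt: "second_difference u z v w t = t * (g (z + t *\<^sub>R w + \<xi> *\<^sub>R v) - g (z + \<xi> *\<^sub>R v))"
    using second_difference_mvt[OF \<open>0 < t\<close> diff] unfolding g_def by blast
  have "\<bar>g (z + t *\<^sub>R w + \<xi> *\<^sub>R v) - g z - D (\<xi> *\<^sub>R v + t *\<^sub>R w)\<bar> \<le> e * norm (\<xi> *\<^sub>R v + t *\<^sub>R w)"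
    using approx[of "z + t *\<^sub>R w + \<xi> *\<^sub>R v"] norm_scaleR_add_le[of \<xi> t t v w] \<xi> \<open>0 < t\<close>
    by (simp add: add_ac)
  also have "\<dots> \<le> e * (t * (norm v + norm w))"
    using norm_scaleR_add_le[of \<xi> t t v w] \<xi> \<open>0 < t\<close> \<open>0 \<le> e\<close> by (simp add: mult_left_mono)
  finally have p: "\<bar>g (z + t *\<^sub>R w + \<xi> *\<^sub>R v) - g z - D (\<xi> *\<^sub>R v + t *\<^sub>R w)\<bar> \<le> e * (t * (norm v + norm w))" .
  have "\<bar>g (z + \<xi> *\<^sub>R v) - g z - D (\<xi> *\<^sub>R v)\<bar> \<le> e * norm (\<xi> *\<^sub>R v + 0 *\<^sub>R w)"
    using approx[of "z + \<xi> *\<^sub>R v"] norm_scaleR_add_le[of \<xi> t 0 v w] \<xi> \<open>0 < t\<close> by simp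
  also have "\<dots> \<le> e * (t * norm v)"
    using \<xi> \<open>0 \<le> e\<close> by (intro mult_left_mono) (auto intro: mult_right_mono)
  finally have q: "\<bar>g (z + \<xi> *\<^sub>R v) - g z - D (\<xi> *\<^sub>R v)\<bar> \<le> e * (t * norm v)" .
  have "D (\<xi> *\<^sub>R v + t *\<^sub>R w) - D (\<xi> *\<^sub>R v) = t * D w"
    using \<open>linear D\<close> by (simp add: linear_add linear_scale)
  with p q have "\<bar>g (z + t *\<^sub>R w + \<xi> *\<^sub>R v) - g (z + \<xi> *\<^sub>R v) - t * D w\<bar> \<le> t * (e * (2 * norm v + norm w))"
    by (simp add: abs_le_iff algebra_simps)
  moreover have "second_difference u z v w t / t\<^sup>2 - D w =
      (g (z + t *\<^sub>R w + \<xi> *\<^sub>R v) - g (z + \<xi> *\<^sub>R v) - t * D w) / t"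
    unfolding mvt using \<open>0 < t\<close> by (simp add: power2_eq_square field_simps)
  ultimately show ?thesis
    using \<open>0 < t\<close> by (simp add: divide_le_eq mult.commute)
qed

lemma second_difference_eventually_bound:
  fixes u :: "'a::real_normed_vector \<Rightarrow> real" and v w z :: 'a
  assumes "open S" "z \<in> S" and diff: "\<And>y. y \<in> S \<Longrightarrow> u differentiable (at y)"
    and D: "(directional_derivative u v has_derivative D) (at z)" and "0 < e"
  shows "\<forall>\<^sub>F t in at_right 0. \<bar>second_difference u z v w t / t\<^sup>2 - D w\<bar> \<le> e * (2 * norm v + norm w)"
proof -
  obtain r where "r > 0" and ball: "ball z r \<subseteq> S"
    using \<open>open S\<close> \<open>z \<in> S\<close> open_contains_ball by blast
  obtain d where "d > 0" and approx: "\<And>y. norm (y - z) < d \<Longrightarrow>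
      \<bar>directional_derivative u v y - directional_derivative u v z - D (y - z)\<bar> \<le> e * norm (y - z)"
    using D \<open>0 < e\<close> unfolding has_derivative_at_alt by force
  define K where "K = norm v + norm w"
  define b where "b = min r d / (K + 1)"
  have "b > 0" "0 \<le> K"
    using \<open>r > 0\<close> \<open>d > 0\<close> by (simp_all add: b_def K_def add_nonneg_pos)
  have small: "t * K < min r d" if "0 < t" "t < b" for t
  proof -
    have "t * K \<le> t * (K + 1)" using that by simp
    also have "\<dots> < b * (K + 1)" using that \<open>0 \<le> K\<close> by (simp add: add_nonneg_pos)
    finally show ?thesis using \<open>0 \<le> K\<close> by (simp add: b_def add_nonneg_pos)
  qed
  show ?thesis
    unfolding eventually_at_right_field
  proof (intro exI[of _ b] conjI allI impI)
    fix t :: real assume "0 < t" "t < b"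
    show "\<bar>second_difference u z v w t / t\<^sup>2 - D w\<bar> \<le> e * (2 * norm v + norm w)"
    proof (rule second_difference_bound[OF \<open>0 < t\<close> less_imp_le[OF \<open>0 < e\<close>] has_derivative_linear[OF D]])
      fix a c assume "a \<in> {0..t}" "c \<in> {0..t}"
      then have "dist (z + a *\<^sub>R v + c *\<^sub>R w) z < r"
        using norm_scaleR_add_le[of a t c v w] small[OF \<open>0 < t\<close> \<open>t < b\<close>]
        by (simp add: dist_norm K_def add.assoc)
      then show "u differentiable (at (z + a *\<^sub>R v + c *\<^sub>R w))"
        using ball diff by (auto simp: dist_commute)
    next
      fix y assume "norm (y - z) \<le> t * (norm v + norm w)"
      then show "\<bar>directional_derivative u v y - directional_derivative u v z - D (y - z)\<bar> \<le> e * norm (y - z)"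
        using approx small[OF \<open>0 < t\<close> \<open>t < b\<close>] by (simp add: K_def)
    qed
  qed (fact \<open>b > 0\<close>)
qed

lemma second_difference_tendsto:
  fixes u :: "'a::real_normed_vector \<Rightarrow> real" and v w z :: 'a
  assumes "open S" "z \<in> S" and "\<And>y. y \<in> S \<Longrightarrow> u differentiable (at y)"
    and "(directional_derivative u v has_derivative D) (at z)"
  shows "((\<lambda>t. second_difference u z v w t / t\<^sup>2) \<longlongrightarrow> D w) (at_right 0)"
proof (rule tendstoI)
  fix \<epsilon> :: real assume "\<epsilon> > 0"
  define e where "e = \<epsilon> / (2 * norm v + norm w + 1)"
  have "0 < 2 * norm v + norm w + 1"
    using norm_ge_zero[of v] norm_ge_zero[of w] by linarith
  then have "0 < e" and e_less: "e * (2 * norm v + norm w) < \<epsilon>"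
    using \<open>\<epsilon> > 0\<close> by (simp_all add: e_def divide_simps)
  have "\<forall>\<^sub>F t in at_right 0. \<bar>second_difference u z v w t / t\<^sup>2 - D w\<bar> \<le> e * (2 * norm v + norm w)"
    using assms \<open>0 < e\<close> by (rule second_difference_eventually_bound)
  then show "\<forall>\<^sub>F t in at_right 0. dist (second_difference u z v w t / t\<^sup>2) (D w) < \<epsilon>"
    by (rule eventually_mono) (use e_less in \<open>unfold dist_real_def; linarith\<close>)
qed

theorem directional_derivative_commute:
  fixes u :: "'a::real_normed_vector \<Rightarrow> real"
  assumes "open S" "z \<in> S" and "\<And>y. y \<in> S \<Longrightarrow> u differentiable (at y)"
    and "(directional_derivative u v has_derivative Dv) (at z)"
    and "(directional_derivative u w has_derivative Dw) (at z)"
  shows "Dv w = Dw v"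
  using second_difference_tendsto[OF assms(1-4), of w] second_difference_tendsto[OF assms(1-3,5), of v]
  by (simp add: second_difference_commute[of u z v w] tendsto_unique[OF trivial_limit_at_right_real])

section \<open>The complex gradient of a harmonic function\<close>

lemma px_eq_directional_derivative: "px u = directional_derivative u 1"
  by (simp add: fun_eq_iff px_def directional_derivative_def scaleR_conv_of_real)

lemma py_eq_directional_derivative: "py u = directional_derivative u \<i>"
  by (simp add: fun_eq_iff py_def directional_derivative_def scaleR_conv_of_real mult.commute)

lemma px_py_eq_derivative:
  assumes "(u has_derivative D) (at z)"
  shows "px u z = D 1" "py u z = D \<i>"
  using directional_derivative_eq[OF assms]
  by (simp_all add: px_eq_directional_derivative py_eq_directional_derivative)

lemma py_px_eq_px_py:
  assumes "open S" "z \<in> S" "\<And>y. y \<in> S \<Longrightarrow> u differentiable (at y)"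
    and "px u differentiable (at z)" "py u differentiable (at z)"
  shows "py (px u) z = px (py u) z"
proof -
  obtain Dx Dy where Dx: "(px u has_derivative Dx) (at z)" and Dy: "(py u has_derivative Dy) (at z)"
    using assms(4,5) by (auto simp: differentiable_def)
  have "Dx \<i> = Dy 1"
    using Dx Dy by (intro directional_derivative_commute[OF assms(1-3)])
      (simp_all add: px_eq_directional_derivative py_eq_directional_derivative)
  then show ?thesis
    using px_py_eq_derivative[OF Dx] px_py_eq_derivative[OF Dy] by simp
qed

text \<open>\<open>complex_grad u = u\<^sub>x - i u\<^sub>y\<close> is twice the Wirtinger derivative \<open>\<partial>u/\<partial>z\<close>.\<close>

definition complex_grad :: "(complex \<Rightarrow> real) \<Rightarrow> complex \<Rightarrow> complex" where
  "complex_grad u z = of_real (px u z) - \<i> * of_real (py u z)"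

lemma Re_complex_grad [simp]: "Re (complex_grad u z) = px u z"
  and Im_complex_grad [simp]: "Im (complex_grad u z) = - py u z"
  by (simp_all add: complex_grad_def)

lemma has_derivative_complex_grad:
  assumes "u differentiable (at z)"
  shows "(u has_derivative (\<lambda>h. Re (complex_grad u z * h))) (at z)"
proof -
  obtain D where D: "(u has_derivative D) (at z)"
    using assms by (auto simp: differentiable_def)
  have "D = (\<lambda>h. Re (complex_grad u z * h))"
  proof
    fix h
    have "h = Re h *\<^sub>R 1 + Im h *\<^sub>R \<i>"
      by (simp add: complex_eq_iff)
    then have "D h = D (Re h *\<^sub>R 1 + Im h *\<^sub>R \<i>)"
      by (rule arg_cong)
    also have "\<dots> = Re h * D 1 + Im h * D \<i>"
      using has_derivative_linear[OF D] by (simp add: linear_add linear_scale)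
    finally show "D h = Re (complex_grad u z * h)"
      using px_py_eq_derivative[OF D] by simp
  qed
  with D show ?thesis
    by simp
qed

lemma harmonic_real_on_open: "harmonic_real_on R u \<Longrightarrow> open R"
  by (simp add: harmonic_real_on_def)

lemma harmonic_real_onD:
  assumes "harmonic_real_on R u" "z \<in> R"
  shows "u differentiable (at z)" "px u differentiable (at z)" "py u differentiable (at z)"
    and "px (px u) z + py (py u) z = 0"
  using assms by (auto simp: harmonic_real_on_def differentiable_on_eq_differentiable_at)

lemma complex_grad_has_field_derivative:
  assumes "harmonic_real_on R u" "z \<in> R"
  shows "(complex_grad u has_field_derivative complex_grad (px u) z) (at z)"
proof -
  note u = harmonic_real_onD[OF assms(1)]
  have deriv: "((\<lambda>y. of_real (px u y) - \<i> * of_real (py u y)) has_derivative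
      (\<lambda>h. of_real (Re (complex_grad (px u) z * h)) - \<i> * of_real (Re (complex_grad (py u) z * h)))) (at z)"
    using assms(2) by (intro derivative_intros has_derivative_complex_grad u)
  have "py (px u) z = px (py u) z"
    using assms u by (intro py_px_eq_px_py[OF harmonic_real_on_open]) auto
  moreover have "py (py u) z = - px (px u) z"
    using u(4)[OF assms(2)] by linarith
  ultimately have "(\<lambda>h. of_real (Re (complex_grad (px u) z * h)) - \<i> * of_real (Re (complex_grad (py u) z * h)))
      = (*) (complex_grad (px u) z)"
    by (auto simp: fun_eq_iff complex_eq_iff algebra_simps)
  with deriv show ?thesis
    by (simp add: has_field_derivative_def complex_grad_def[abs_def])
qed

lemma complex_grad_holomorphic_on:
  assumes "harmonic_real_on R u"
  shows "complex_grad u holomorphic_on R"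
  using assms complex_grad_has_field_derivative harmonic_real_on_open
  by (metis holomorphic_on_open)

lemma has_derivative_eq_imp_constant_difference:
  fixes u1 u2 :: "'a::euclidean_space \<Rightarrow> 'b::banach"
  assumes "open S" "connected S"
    and u1: "\<And>z. z \<in> S \<Longrightarrow> (u1 has_derivative D z) (at z)"
    and u2: "\<And>z. z \<in> S \<Longrightarrow> (u2 has_derivative D z) (at z)"
  shows "\<exists>c. \<forall>z\<in>S. u1 z = u2 z + c"
proof -
  have deriv: "((\<lambda>z. u1 z - u2 z) has_derivative (\<lambda>h. 0)) (at z)" if "z \<in> S" for z
    using has_derivative_diff[OF u1[OF that] u2[OF that]] by simp
  have "(\<lambda>z. u1 z - u2 z) constant_on S"
  proof (rule has_derivative_zero_connected_constant_on[OF \<open>connected S\<close> \<open>open S\<close> finite.emptyI])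
    show "continuous_on S (\<lambda>z. u1 z - u2 z)"
      using deriv by (intro has_derivative_continuous_on) (auto intro: has_derivative_at_withinI)
    show "\<forall>x\<in>S - {}. ((\<lambda>z. u1 z - u2 z) has_derivative (\<lambda>h. 0)) (at x within S)"
      using deriv by (auto intro: has_derivative_at_withinI)
  qed
  then show ?thesis
    by (auto simp: constant_on_def algebra_simps)
qed

lemma complex_grad_proportional_imp_affine:
  assumes "open R" "connected R"
    and "\<And>z. z \<in> R \<Longrightarrow> u differentiable (at z)" "\<And>z. z \<in> R \<Longrightarrow> w differentiable (at z)"
    and "\<And>z. z \<in> R \<Longrightarrow> complex_grad w z = of_real l * complex_grad u z"
  shows "\<exists>c. \<forall>z\<in>R. w z = l * u z + c"
proof (rule has_derivative_eq_imp_constant_difference[OF assms(1,2)])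
  fix z assume "z \<in> R"
  show "(w has_derivative (\<lambda>h. Re (complex_grad w z * h))) (at z)"
    using \<open>z \<in> R\<close> assms(4) by (intro has_derivative_complex_grad)
  have "((\<lambda>z. l * u z) has_derivative (\<lambda>h. l * Re (complex_grad u z * h))) (at z)"
    using \<open>z \<in> R\<close> assms(3) by (intro derivative_intros has_derivative_complex_grad)
  then show "((\<lambda>z. l * u z) has_derivative (\<lambda>h. Re (complex_grad w z * h))) (at z)"
    using assms(5)[OF \<open>z \<in> R\<close>] by (simp add: mult.assoc)
qed

section \<open>Level sets of real harmonic functions\<close>

lemma harmonic_real_on_eq_Re_primitive:
  assumes "harmonic_real_on R w" "convex S" "open S" "S \<subseteq> R"
  obtains H where "\<And>z. z \<in> S \<Longrightarrow> (H has_field_derivative complex_grad w z) (at z)"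
    and "\<And>z. z \<in> S \<Longrightarrow> Re (H z) = w z"
proof -
  have "complex_grad w holomorphic_on S"
    using complex_grad_holomorphic_on[OF assms(1)] assms(4) by (rule holomorphic_on_subset)
  then obtain H0 where H0_within: "\<And>z. z \<in> S \<Longrightarrow> (H0 has_field_derivative complex_grad w z) (at z within S)"
    using holomorphic_convex_primitive'[OF assms(2,3)] by blast
  have H0: "(H0 has_field_derivative complex_grad w z) (at z)" if "z \<in> S" for z
    using H0_within[OF that] at_within_open[OF that \<open>open S\<close>] by simp
  have "\<exists>c. \<forall>z\<in>S. w z = Re (H0 z) + c"
  proof (rule has_derivative_eq_imp_constant_difference[OF \<open>open S\<close> convex_connected[OF \<open>convex S\<close>]])
    fix z assume "z \<in> S"
    then show "(w has_derivative (\<lambda>h. Re (complex_grad w z * h))) (at z)"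
      using assms harmonic_real_onD(1) by (blast intro: has_derivative_complex_grad)
    show "((\<lambda>z. Re (H0 z)) has_derivative (\<lambda>h. Re (complex_grad w z * h))) (at z)"
      using H0[OF \<open>z \<in> S\<close>] by (auto intro!: derivative_eq_intros simp: has_field_derivative_def)
  qed
  then obtain c where c: "\<And>z. z \<in> S \<Longrightarrow> w z = Re (H0 z) + c"
    by blast
  show thesis
  proof
    fix z assume "z \<in> S"
    then show "((\<lambda>z. H0 z + of_real c) has_field_derivative complex_grad w z) (at z)"
      using H0 by (auto intro!: derivative_eq_intros)
    show "Re (H0 z + of_real c) = w z"
      using c[OF \<open>z \<in> S\<close>] by simp
  qed
qed

lemma Re_nonconstant_holomorphic_above_below:
  assumes "H holomorphic_on S" "open S" "connected S" "\<not> H constant_on S" "z0 \<in> S"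
  shows "\<exists>a\<in>S. \<exists>b\<in>S. Re (H a) < Re (H z0) \<and> Re (H z0) < Re (H b)"
proof -
  have "open (H ` S)"
    using open_mapping_thm[OF assms(1-3) \<open>open S\<close> order_refl assms(4)] .
  then obtain e where "e > 0" and e: "ball (H z0) e \<subseteq> H ` S"
    using assms(5) open_contains_ball by blast
  have "H z0 - of_real (e/2) \<in> H ` S" "H z0 + of_real (e/2) \<in> H ` S"
    using e \<open>e > 0\<close> by (auto simp: dist_norm subset_iff)
  then obtain a b where "a \<in> S" "b \<in> S" "H a = H z0 - of_real (e/2)" "H b = H z0 + of_real (e/2)"
    by (metis imageE)
  with \<open>e > 0\<close> show ?thesis
    by force
qed

lemma harmonic_real_on_above_below:
  assumes "harmonic_real_on R w" "connected R" "z0 \<in> R" "z1 \<in> R" "complex_grad w z1 \<noteq> 0"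
  shows "\<exists>a\<in>R. \<exists>b\<in>R. w a < w z0 \<and> w z0 < w b"
proof -
  have "open R"
    using assms(1) by (rule harmonic_real_on_open)
  then obtain r where "r > 0" and ball: "ball z0 r \<subseteq> R"
    using assms(3) open_contains_ball by blast
  obtain H where H: "\<And>z. z \<in> ball z0 r \<Longrightarrow> (H has_field_derivative complex_grad w z) (at z)"
    and Re_H: "\<And>z. z \<in> ball z0 r \<Longrightarrow> Re (H z) = w z"
    using harmonic_real_on_eq_Re_primitive[OF assms(1) convex_ball open_ball ball] by blast
  have hol: "H holomorphic_on ball z0 r"
    unfolding holomorphic_on_open[OF open_ball] using H by blast
  have "\<not> H constant_on ball z0 r"
  proof
    assume "H constant_on ball z0 r"
    then obtain c where c: "\<And>z. z \<in> ball z0 r \<Longrightarrow> c = H z"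
      by (auto simp: constant_on_def)
    have "complex_grad w z = 0" if "z \<in> ball z0 r" for z
      using has_field_derivative_transform_within_open[OF DERIV_const open_ball that c] H[OF that]
      by (rule DERIV_unique[symmetric])
    then have "complex_grad w z1 = 0"
      using \<open>r > 0\<close> analytic_continuation_open[OF open_ball \<open>open R\<close> _ assms(2) ball
          complex_grad_holomorphic_on[OF assms(1)] holomorphic_on_const _ assms(4)]
      by auto
    with assms(5) show False ..
  qed
  then obtain a b where "a \<in> ball z0 r" "b \<in> ball z0 r" "Re (H a) < Re (H z0)" "Re (H z0) < Re (H b)"
    using Re_nonconstant_holomorphic_above_below[OF hol open_ball connected_ball _ centre_in_ball[THEN iffD2, OF \<open>r > 0\<close>]]
    by blast
  with Re_H ball \<open>r > 0\<close> show ?thesis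
    by (metis centre_in_ball subsetD)
qed

lemma harmonic_real_on_level_set_infinite:
  assumes "harmonic_real_on R w" "connected R" "z0 \<in> R"
  shows "infinite {z\<in>R. w z = w z0}"
proof
  assume fin: "finite {z\<in>R. w z = w z0}"
  have "open R"
    using assms(1) by (rule harmonic_real_on_open)
  have w_diff: "\<And>z. z \<in> R \<Longrightarrow> w differentiable (at z)"
    using assms(1) by (rule harmonic_real_onD)
  show False
  proof (cases "\<forall>z\<in>R. complex_grad w z = 0")
    case True
    then obtain c where "\<forall>z\<in>R. w z = 0 * w z + c"
      using complex_grad_proportional_imp_affine[OF \<open>open R\<close> assms(2) w_diff w_diff, of 0] by auto
    then have "{z\<in>R. w z = w z0} = R"
      using assms(3) by auto
    with fin \<open>open R\<close> assms(3) show False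
      using finite_imp_not_open by fastforce
  next
    case False
    then obtain a b where "a \<in> R" "b \<in> R" "w a < w z0" "w z0 < w b"
      using harmonic_real_on_above_below[OF assms] by blast
    have "continuous_on (R - {z\<in>R. w z = w z0}) w"
      using w_diff by (blast intro: continuous_at_imp_continuous_on differentiable_imp_continuous_within)
    moreover have "connected (R - {z\<in>R. w z = w z0})"
      using connected_open_delete_finite[OF \<open>open R\<close> assms(2) _ fin] by simp
    ultimately have "connected (w ` (R - {z\<in>R. w z = w z0}))"
      by (rule connected_continuous_image)
    moreover have "w a \<in> w ` (R - {z\<in>R. w z = w z0})" "w b \<in> w ` (R - {z\<in>R. w z = w z0})"
      using \<open>a \<in> R\<close> \<open>b \<in> R\<close> \<open>w a < w z0\<close> \<open>w z0 < w b\<close> by auto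
    ultimately have "w z0 \<in> w ` (R - {z\<in>R. w z = w z0})"
      using \<open>w a < w z0\<close> \<open>w z0 < w b\<close> connectedD_interval by fastforce
    then show False
      by auto
  qed
qed

section \<open>Harmonic maps whose Jacobian vanishes on an open set\<close>

lemma holomorphic_real_valued_imp_constant:
  assumes "q holomorphic_on S" "open S" "connected S" "\<And>z. z \<in> S \<Longrightarrow> Im (q z) = 0"
  shows "q constant_on S"
proof -
  have "(\<lambda>z. \<i> * q z) constant_on S"
  proof (rule ccontr)
    assume "\<not> (\<lambda>z. \<i> * q z) constant_on S"
    moreover have "(\<lambda>z. \<i> * q z) holomorphic_on S"
      using assms(1) by (intro holomorphic_intros)
    moreover obtain z0 where "z0 \<in> S"
      using \<open>\<not> (\<lambda>z. \<i> * q z) constant_on S\<close> by (auto simp: constant_on_def)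
    ultimately show False
      using Re_nonconstant_holomorphic_above_below[of "\<lambda>z. \<i> * q z" S z0] assms(2-4) by auto
  qed
  then obtain c where "\<And>z. z \<in> S \<Longrightarrow> \<i> * q z = c"
    by (auto simp: constant_on_def)
  then have "\<And>z. z \<in> S \<Longrightarrow> q z = - \<i> * c"
    by force
  then show ?thesis
    by (auto simp: constant_on_def)
qed

lemma holomorphic_real_ratio_imp_proportional:
  assumes "g holomorphic_on S" "h holomorphic_on S" "open S" "connected S"
    and nonzero: "\<And>z. z \<in> S \<Longrightarrow> g z \<noteq> 0"
    and Im_zero: "\<And>z. z \<in> S \<Longrightarrow> Im (g z * cnj (h z)) = 0"
  shows "\<exists>l. \<forall>z\<in>S. h z = of_real l * g z"
proof -
  have Im_ratio: "Im (h z / g z) = 0" if "z \<in> S" for z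
  proof -
    have "Im (h z) * Re (g z) - Re (h z) * Im (g z) = 0"
      using Im_zero[OF that] by (simp add: algebra_simps)
    then show ?thesis
      by (simp only: Im_divide)
  qed
  have "(\<lambda>z. h z / g z) holomorphic_on S"
    using assms(1,2) nonzero by (intro holomorphic_on_divide)
  then have "(\<lambda>z. h z / g z) constant_on S"
    using holomorphic_real_valued_imp_constant[OF _ assms(3,4)] Im_ratio by blast
  then obtain c where c: "\<And>z. z \<in> S \<Longrightarrow> h z / g z = c"
    by (auto simp: constant_on_def)
  have "h z = of_real (Re c) * g z" if "z \<in> S" for z
  proof -
    have "c = of_real (Re c)"
      using Im_ratio[OF that] c[OF that] by (simp add: complex_eq_iff)
    then show ?thesis
      using c[OF that] nonzero[OF that] by (simp add: divide_eq_eq)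
  qed
  then show ?thesis
    by blast
qed

lemma holomorphic_vanishing_or_proportional:
  assumes g: "g holomorphic_on S" and h: "h holomorphic_on S" and "open S" "connected S"
    and "open T" "T \<noteq> {}" "T \<subseteq> S"
    and Im_zero: "\<And>z. z \<in> T \<Longrightarrow> Im (g z * cnj (h z)) = 0"
  shows "(\<forall>z\<in>S. g z = 0) \<or> (\<exists>l. \<forall>z\<in>S. h z = of_real l * g z)"
proof (cases "\<forall>z\<in>T. g z = 0")
  case True
  have "g z = (\<lambda>_. 0) z" if "z \<in> S" for z
    by (rule analytic_continuation_open[OF \<open>open T\<close> \<open>open S\<close> \<open>T \<noteq> {}\<close> \<open>connected S\<close> \<open>T \<subseteq> S\<close>
          g holomorphic_on_const _ that]) (use True in simp)
  then show ?thesis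
    by simp
next
  case False
  then obtain z0 where "z0 \<in> T" "g z0 \<noteq> 0"
    by blast
  have "continuous_on T g"
    by (rule holomorphic_on_imp_continuous_on[OF holomorphic_on_subset[OF g \<open>T \<subseteq> S\<close>]])
  then have "open (T \<inter> g -` (- {0}))"
    using \<open>open T\<close> by (intro continuous_open_preimage) auto
  moreover have "z0 \<in> T \<inter> g -` (- {0})"
    using \<open>z0 \<in> T\<close> \<open>g z0 \<noteq> 0\<close> by simp
  ultimately obtain r where "r > 0" and ball: "ball z0 r \<subseteq> T \<inter> g -` (- {0})"
    by (rule openE)
  then have "ball z0 r \<subseteq> S"
    using \<open>T \<subseteq> S\<close> by blast
  then obtain l where on_ball: "\<And>z. z \<in> ball z0 r \<Longrightarrow> h z = of_real l * g z"
    using holomorphic_real_ratio_imp_proportional[OF holomorphic_on_subset[OF g] holomorphic_on_subset[OF h]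
        open_ball connected_ball] ball Im_zero by blast
  have "(\<lambda>z. of_real l * g z) holomorphic_on S"
    using g by (intro holomorphic_intros)
  then have "h z = of_real l * g z" if "z \<in> S" for z
    using analytic_continuation_open[OF open_ball \<open>open S\<close> _ \<open>connected S\<close> \<open>ball z0 r \<subseteq> S\<close> h _ on_ball that]
      \<open>r > 0\<close> by simp
  then show ?thesis
    by blast
qed

lemma jac_eq_Im_complex_grad:
  "jac f z = Im (complex_grad (\<lambda>z. Re (f z)) z * cnj (complex_grad (\<lambda>z. Im (f z)) z))"
  by (simp add: jac_def)

lemma harmonic_on_eq_affine_real_harmonic:
  assumes "harmonic_on R f" "open R" "connected R"
    and "(\<forall>z\<in>R. complex_grad (\<lambda>z. Re (f z)) z = 0) \<or>
         (\<exists>l. \<forall>z\<in>R. complex_grad (\<lambda>z. Im (f z)) z = of_real l * complex_grad (\<lambda>z. Re (f z)) z)"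
  shows "\<exists>\<alpha> \<beta>. \<exists>w. harmonic_real_on R w \<and> (\<forall>z\<in>R. f z = \<alpha> + \<beta> * of_real (w z))"
  using assms(4)
proof
  assume "\<forall>z\<in>R. complex_grad (\<lambda>z. Re (f z)) z = 0"
  then obtain c where "\<forall>z\<in>R. Re (f z) = 0 * Re (f z) + c"
    using complex_grad_proportional_imp_affine[OF assms(2,3), of "\<lambda>z. Re (f z)" "\<lambda>z. Re (f z)" 0]
      assms(1) harmonic_real_onD(1) by (force simp: harmonic_on_def)
  then have "\<forall>z\<in>R. f z = of_real c + \<i> * of_real (Im (f z))"
    by (simp add: complex_eq_iff)
  with assms(1) show ?thesis
    unfolding harmonic_on_def by blast
next
  assume "\<exists>l. \<forall>z\<in>R. complex_grad (\<lambda>z. Im (f z)) z = of_real l * complex_grad (\<lambda>z. Re (f z)) z"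
  then obtain l c where "\<forall>z\<in>R. Im (f z) = l * Re (f z) + c"
    using complex_grad_proportional_imp_affine[OF assms(2,3), of "\<lambda>z. Re (f z)" "\<lambda>z. Im (f z)"]
      assms(1) harmonic_real_onD(1) by (force simp: harmonic_on_def)
  then have "\<forall>z\<in>R. f z = \<i> * of_real c + (1 + \<i> * of_real l) * of_real (Re (f z))"
    by (simp add: complex_eq_iff)
  with assms(1) show ?thesis
    unfolding harmonic_on_def by blast
qed

lemma complex_grads_dependent_if_interior_crit_set:
  assumes "harmonic_on R f" "open R" "connected R" "interior (crit_set R f) \<noteq> {}"
  shows "(\<forall>z\<in>R. complex_grad (\<lambda>z. Re (f z)) z = 0) \<or>
         (\<exists>l. \<forall>z\<in>R. complex_grad (\<lambda>z. Im (f z)) z = of_real l * complex_grad (\<lambda>z. Re (f z)) z)"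
proof -
  have "interior (crit_set R f) \<subseteq> R" and jac_zero: "\<And>z. z \<in> interior (crit_set R f) \<Longrightarrow> jac f z = 0"
    using interior_subset[of "crit_set R f"] by (auto simp: crit_set_def)
  then show ?thesis
    using assms jac_zero[unfolded jac_eq_Im_complex_grad] unfolding harmonic_on_def
    by (intro holomorphic_vanishing_or_proportional[OF complex_grad_holomorphic_on complex_grad_holomorphic_on
          _ \<open>connected R\<close> open_interior]) auto
qed

lemma crit_set_eq_if_complex_grads_dependent:
  assumes "(\<forall>z\<in>R. complex_grad (\<lambda>z. Re (f z)) z = 0) \<or>
           (\<exists>l. \<forall>z\<in>R. complex_grad (\<lambda>z. Im (f z)) z = of_real l * complex_grad (\<lambda>z. Re (f z)) z)"
  shows "crit_set R f = R"
proof -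
  have "Im (complex_grad (\<lambda>z. Re (f z)) z * cnj (complex_grad (\<lambda>z. Im (f z)) z)) = 0" if "z \<in> R" for z
    using assms
  proof
    assume "\<forall>z\<in>R. complex_grad (\<lambda>z. Re (f z)) z = 0"
    with that show ?thesis
      by simp
  next
    assume "\<exists>l. \<forall>z\<in>R. complex_grad (\<lambda>z. Im (f z)) z = of_real l * complex_grad (\<lambda>z. Re (f z)) z"
    with that obtain l where l: "complex_grad (\<lambda>z. Im (f z)) z = of_real l * complex_grad (\<lambda>z. Re (f z)) z"
      by blast
    show ?thesis
      by (simp only: l) (simp add: algebra_simps)
  qed
  then show ?thesis
    by (auto simp: crit_set_def jac_eq_Im_complex_grad)
qed

lemma Val_affine_harmonic_real_on:
  assumes "harmonic_real_on R w" "connected R" "\<forall>z\<in>R. f z = \<alpha> + \<beta> * of_real (w z)" "w0 \<in> f ` R"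
  shows "Val R f w0 = \<infinity>"
proof -
  obtain z0 where "z0 \<in> R" "w0 = f z0"
    using assms(4) by blast
  then have "{z\<in>R. w z = w z0} \<subseteq> {z\<in>R. f z = w0}"
    using assms(3) by auto
  then have "infinite {z\<in>R. f z = w0}"
    using harmonic_real_on_level_set_infinite[OF assms(1,2) \<open>z0 \<in> R\<close>] by (rule infinite_super)
  then show ?thesis
    by (simp add: Val_def)
qed

theorem lemma4p7:
  fixes f :: "complex \<Rightarrow> complex" and R :: "complex set"
  assumes "open R" and "simply_connected R"
    and "harmonic_on R f"
    and "interior (crit_set R f) \<noteq> {}"
  shows "(\<exists>\<alpha> \<beta> :: complex. \<exists>u :: complex \<Rightarrow> real.
            harmonic_real_on R u \<and> (\<forall>z\<in>R. f z = \<alpha> + \<beta> * of_real (u z)))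
         \<and> crit_set R f = R
         \<and> (\<forall>w0\<in>f ` R. Val R f w0 = \<infinity>)"
proof -
  have "connected R"
    using assms(2) by (rule simply_connected_imp_connected)
  have grads: "(\<forall>z\<in>R. complex_grad (\<lambda>z. Re (f z)) z = 0) \<or>
      (\<exists>l. \<forall>z\<in>R. complex_grad (\<lambda>z. Im (f z)) z = of_real l * complex_grad (\<lambda>z. Re (f z)) z)"
    using complex_grads_dependent_if_interior_crit_set[OF assms(3,1) \<open>connected R\<close> assms(4)] .
  then obtain \<alpha> \<beta> w where w: "harmonic_real_on R w" and f: "\<forall>z\<in>R. f z = \<alpha> + \<beta> * of_real (w z)"
    using harmonic_on_eq_affine_real_harmonic[OF assms(3,1) \<open>connected R\<close>] by blast
  moreover have "crit_set R f = R"
    using grads by (rule crit_set_eq_if_complex_grads_dependent)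
  moreover have "Val R f w0 = \<infinity>" if "w0 \<in> f ` R" for w0
    using Val_affine_harmonic_real_on[OF w \<open>connected R\<close> f that] .
  ultimately show ?thesis
    by (intro conjI ballI exI) auto
qed

end
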